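(* Let $A_1=C\setminus\mathbb{A}_1$ and $A_2=C\setminus\mathbb{A}_2$ be $C$-coconvex sets. Then $$V(A_1\oplus A_2)^{1/n}\le V(A_1\widetilde{+}A_2)^{1/n}\le V(A_1)^{1/n}+V(A_2)^{1/n},$$ and equality holds in both inequalities if and only if $\mathbb{A}_1$ and $\mathbb{A}_2$ are dilates of each other.
   Context: $C\subset\mathbb{R}^n$ ($n\ge2$) is a pointed closed convex cone with nonempty interior; $\Omega_C=\mathbb{S}^{n-1}\cap\operatorname{int}C$; $V$ is Lebesgue measure. A $C$-close set is a closed convex set $\mathbb{A}\subset C$ with $o\notin\mathbb{A}$, $\lambda x\in\mathbb{A}$ for $x\in\mathbb{A},\lambda\ge1$, recession cone $C$, and $C\setminus\mathbb{A}$ of finite volume; $A=C\setminus\mathbb{A}$ is a $C$-coconvex set. With $\rho_{\mathbb{A}}(u)=\min\{r>0:ru\in\mathbb{A}\}$, the radial sum of $\mathbb{A}_1,\mathbb{A}_2$ is $\operatorname{cl}\{\lambda u:u\in\Omega_C,\lambda\ge\rho_{\mathbb{A}_1}(u)+\rho_{\mathbb{A}_2}(u)\}$, and $A_1\widetilde{+}A_2$ is $C$ minus this radial sum. The co-sum is $A_1\oplus A_2=C\setminus(\mathbb{A}_1+\mathbb{A}_2)$ (Minkowski sum). Dilates: $\mathbb{A}_2=\lambda\mathbb{A}_1$ for some $\lambda>0$. *)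

theory Defs
  imports "HOL-Analysis.Analysis"
begin

definition pointed_cone :: "'a::euclidean_space set \<Rightarrow> bool" where
  "pointed_cone C \<longleftrightarrow> convex_cone C \<and> closed C \<and> interior C \<noteq> {} \<and>
     C \<inter> uminus ` C = {0}"

definition rec_cone :: "'a::euclidean_space set \<Rightarrow> 'a set" where
  "rec_cone K = {y. \<forall>x\<in>K. \<forall>t::real\<ge>0. x + t *\<^sub>R y \<in> K}"

definition C_close :: "'a::euclidean_space set \<Rightarrow> 'a set \<Rightarrow> bool" where
  "C_close C AA \<longleftrightarrow> closed AA \<and> convex AA \<and> AA \<subseteq> C \<and> 0 \<notin> AA \<and>
     (\<forall>x\<in>AA. \<forall>l::real\<ge>1. l *\<^sub>R x \<in> AA) \<and> rec_cone AA = C \<and>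
     (C - AA) \<in> lmeasurable"

definition Omega :: "'a::euclidean_space set \<Rightarrow> 'a set" where
  "Omega C = sphere 0 1 \<inter> interior C"

definition radial :: "'a::euclidean_space set \<Rightarrow> 'a \<Rightarrow> real" where
  "radial AA u = Inf {r. r > 0 \<and> r *\<^sub>R u \<in> AA}"

definition radial_sum :: "'a::euclidean_space set \<Rightarrow> 'a set \<Rightarrow> 'a set \<Rightarrow> 'a set" where
  "radial_sum C AA1 AA2 =
     closure {l *\<^sub>R u | l u. u \<in> Omega C \<and> l \<ge> radial AA1 u + radial AA2 u}"

text \<open>Radial co-sum of the coconvex sets C - AA1 and C - AA2.\<close>
definition radial_cosum :: "'a::euclidean_space set \<Rightarrow> 'a set \<Rightarrow> 'a set \<Rightarrow> 'a set" where
  "radial_cosum C AA1 AA2 = C - radial_sum C AA1 AA2"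

text \<open>Co-sum of the coconvex sets C - AA1 and C - AA2 (via Minkowski sum).\<close>
definition co_sum :: "'a::euclidean_space set \<Rightarrow> 'a set \<Rightarrow> 'a set \<Rightarrow> 'a set" where
  "co_sum C AA1 AA2 = C - {a + b | a b. a \<in> AA1 \<and> b \<in> AA2}"

definition dilates :: "'a::euclidean_space set \<Rightarrow> 'a set \<Rightarrow> bool" where
  "dilates AA1 AA2 \<longleftrightarrow> (\<exists>l::real>0. AA2 = (\<lambda>x. l *\<^sub>R x) ` AA1)"

end

theory Submission
  imports Defs
begin

text \<open>The radial function \<open>\<rho>\<close> of a \<open>C\<close>-close set \<open>AA\<close> is homogeneous of degree \<open>-1\<close> on
  \<open>int C\<close>, and convexity of \<open>AA\<close> makes \<open>1/\<rho>\<close> concave, so \<open>\<rho>\<close> is continuous there. With the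
  \<open>0\<close>-homogeneous \<open>h x = |x| \<rho> x\<close>, the set \<open>C - AA\<close> is \<open>{x \<in> int C. |x|\<^sup>n < h x\<^sup>n}\<close> up to the
  null boundary of \<open>C\<close>, and a layer-cake computation gives \<open>V(C - AA) = \<integral>\<^sub>B h\<^sup>n\<close> with
  \<open>B = int C \<inter> ball 0 1\<close>. Inside \<open>int C\<close> the radial co-sum is \<open>{\<rho>\<^sub>1 + \<rho>\<^sub>2 > 1}\<close>, so its volume
  is \<open>\<integral>\<^sub>B (h\<^sub>1 + h\<^sub>2)\<^sup>n\<close>, and Minkowski's inequality in \<open>L\<^sup>n(B)\<close> gives the second inequality. For
  \<open>n \<ge> 2\<close> strict convexity of \<open>t\<^sup>n\<close> forces \<open>h\<^sub>2 = k h\<^sub>1\<close> in the equality case, i.e. \<open>AA\<^sub>2 = k AA\<^sub>1\<close>.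
  The first inequality holds because the radial sum lies in the Minkowski sum \<open>AA\<^sub>1 + AA\<^sub>2\<close>
  (split \<open>x\<close> as \<open>\<rho>\<^sub>1(x) x + (1 - \<rho>\<^sub>1(x)) x\<close>), whose boundary is null; for dilates both sums
  are \<open>(1 + k) AA\<^sub>1\<close>.\<close>

lemma power_less_power_iff_base:
  fixes a b :: "'a::linordered_semidom"
  assumes "0 \<le> a" "0 \<le> b" "0 < n"
  shows "a ^ n < b ^ n \<longleftrightarrow> a < b"
  using power_mono_iff[of b a n] assms not_le by blast

lemma emeasure_lborel_scaleR_image:
  fixes S :: "'a::euclidean_space set"
  assumes S: "S \<in> sets lborel" and c: "0 < c"
  shows "emeasure lborel ((\<lambda>x. c *\<^sub>R x) ` S) = ennreal (c ^ DIM('a)) * emeasure lborel S"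
proof -
  have img: "(\<lambda>x. c *\<^sub>R x) ` S = (\<lambda>x. inverse c *\<^sub>R x) -` S"
    using c by (auto simp: image_iff intro!: bexI[where x="inverse c *\<^sub>R _"])
  have meas: "(\<lambda>x. c *\<^sub>R x) ` S \<in> sets lborel"
    unfolding img using measurable_sets_borel[of "\<lambda>x. inverse c *\<^sub>R x" borel S] S by simp
  have pre: "(\<lambda>x. 0 + c *\<^sub>R x) -` ((\<lambda>x. c *\<^sub>R x) ` S) = S"
    using c by auto
  have "emeasure lborel ((\<lambda>x. c *\<^sub>R x) ` S) =
        emeasure (density (distr lborel borel (\<lambda>x. 0 + c *\<^sub>R x)) (\<lambda>_. \<bar>c\<bar>^DIM('a))) ((\<lambda>x. c *\<^sub>R x) ` S)"
    using lborel_affine[of c 0] c by (metis less_irrefl)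
  also have "\<dots> = ennreal (c ^ DIM('a)) * emeasure lborel S"
    using meas c pre by (simp add: emeasure_density nn_integral_cmult_indicator emeasure_distr)
  finally show ?thesis .
qed

lemma open_Collect_less_on:
  fixes f g :: "'a::topological_space \<Rightarrow> real"
  assumes "open W" "continuous_on W f" "continuous_on W g"
  shows "open {x\<in>W. f x < g x}"
proof -
  obtain A where "open A" "A \<inter> W = {x\<in>W. f x < g x}"
    using open_Collect_less_Int[OF assms(2,3)] by blast
  then show ?thesis using assms(1) by (metis open_Int)
qed

lemma open_slice:
  fixes W :: "('a::topological_space \<times> 'b::topological_space) set"
  assumes "open W"
  shows "open {x. (x, s) \<in> W}"
proof -
  have "open ((\<lambda>x. (x, s)) -` W)"
    by (intro open_vimage assms continuous_intros)
  then show ?thesis by (simp add: vimage_def)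
qed

lemma measure_le_of_subset_Un_negligible:
  fixes S T N :: "'a::euclidean_space set"
  assumes T: "T \<in> lmeasurable" and N: "negligible N" and sub: "S \<subseteq> T \<union> N"
  shows "measure lebesgue S \<le> measure lebesgue T"
proof (cases "S \<in> sets lebesgue")
  case True
  have Nm: "N \<in> lmeasurable" using N by (rule negligible_imp_measurable)
  have "measure lebesgue S \<le> measure lebesgue (T \<union> N)"
    using sub True T Nm by (intro measure_mono_fmeasurable) auto
  also have "\<dots> \<le> measure lebesgue T + measure lebesgue N"
    using T Nm by (intro measure_Un_le) auto
  finally show ?thesis using N by (simp add: negligible_imp_measure0)
qed (simp add: measure_notin_sets)

lemma fmeasurable_of_subset_Un_negligible:
  fixes S T N :: "'a::euclidean_space set"
  assumes "T \<in> lmeasurable" "negligible N" "S \<subseteq> T \<union> N" "S \<in> sets lebesgue"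
  shows "S \<in> lmeasurable"
proof (rule fmeasurableI2[of "T \<union> N"])
  show "T \<union> N \<in> lmeasurable"
    using assms(1,2) by (simp add: fmeasurable.Un negligible_imp_measurable)
qed (use assms(3,4) in auto)

lemma sets_lebesgue_convex:
  fixes S :: "'a::euclidean_space set"
  assumes "convex S"
  shows "S \<in> sets lebesgue"
proof -
  have "S - interior S \<subseteq> frontier S"
    using closure_subset by (auto simp: frontier_def)
  then have "S - interior S \<in> null_sets lebesgue"
    using negligible_subset[OF negligible_convex_frontier[OF assms]] by (simp add: negligible_iff_null_sets)
  then have "interior S \<union> (S - interior S) \<in> sets lebesgue"
    by (intro sets.Un) (auto intro: borel_open)
  moreover have "interior S \<union> (S - interior S) = S" using interior_subset by blast
  ultimately show ?thesis by simp
qed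

lemma borel_measurable_indicator_mult_continuous:
  fixes g :: "'a::euclidean_space \<Rightarrow> real"
  assumes "open B" "continuous_on B g"
  shows "(\<lambda>x. ennreal (indicator B x * g x)) \<in> borel_measurable borel"
proof -
  have "(\<lambda>x. indicator B x *\<^sub>R g x) \<in> borel_measurable borel"
    using assms by (intro borel_measurable_continuous_on_indicator) auto
  then show ?thesis by simp
qed

lemma nn_integral_indicator_eq_0_imp_zero_on:
  fixes g :: "'a::euclidean_space \<Rightarrow> real"
  assumes B: "open B" and g: "continuous_on B g" "\<And>x. x \<in> B \<Longrightarrow> 0 \<le> g x"
    and zero: "(\<integral>\<^sup>+x. ennreal (indicator B x * g x) \<partial>lborel) = 0"
    and x: "x \<in> B"
  shows "g x = 0"
proof -
  define D where "D = {x\<in>B. 0 < g x}"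
  have D: "open D"
    unfolding D_def by (rule open_Collect_less_on[OF B]) (use g in \<open>auto intro!: continuous_intros\<close>)
  have "AE x in lborel. ennreal (indicator B x * g x) = 0"
    using zero borel_measurable_indicator_mult_continuous[OF B g(1)] by (simp add: nn_integral_0_iff_AE)
  moreover have "{x\<in>space lborel. ennreal (indicator B x * g x) \<noteq> 0} = D"
    by (auto simp: D_def ennreal_eq_0_iff not_le split: split_indicator)
  ultimately have "emeasure lborel D = 0"
    using D AE_iff_measurable[of D lborel] by auto
  then have "negligible D"
    using D by (simp add: negligible_iff_null_sets null_sets_completionI null_sets_def)
  then have "D = {}" using open_not_negligible[OF D] by blast
  then show ?thesis using x g(2)[OF x] by (force simp: D_def)
qed

section \<open>Convexity of powers and Minkowski's inequality\<close>

lemma convex_combination_times_power_le: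
  fixes l p q :: real
  assumes l: "0 \<le> l" "l \<le> 1" and pq: "0 \<le> p" "0 \<le> q"
  shows "(l * p + (1 - l) * q) * (l * p ^ N + (1 - l) * q ^ N) \<le> l * p ^ Suc N + (1 - l) * q ^ Suc N"
proof -
  have "0 \<le> (p - q) * (p ^ N - q ^ N)"
    using pq by (cases "p \<le> q") (auto intro: mult_nonpos_nonpos simp: power_mono)
  then have "0 \<le> l * (1 - l) * ((p - q) * (p ^ N - q ^ N))"
    using l by simp
  moreover have "l * p ^ Suc N + (1 - l) * q ^ Suc N - (l * p + (1 - l) * q) * (l * p ^ N + (1 - l) * q ^ N)
      = l * (1 - l) * ((p - q) * (p ^ N - q ^ N))"
    by (simp add: algebra_simps)
  ultimately show ?thesis by linarith
qed

lemma power_convex_combination_le: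
  fixes l p q :: real
  assumes l: "0 \<le> l" "l \<le> 1" and pq: "0 \<le> p" "0 \<le> q"
  shows "(l * p + (1 - l) * q) ^ N \<le> l * p ^ N + (1 - l) * q ^ N"
proof (induction N)
  case (Suc N)
  have "0 \<le> l * p + (1 - l) * q" using l pq by simp
  then have "(l * p + (1 - l) * q) ^ Suc N \<le> (l * p + (1 - l) * q) * (l * p ^ N + (1 - l) * q ^ N)"
    using Suc.IH by (simp add: mult_left_mono)
  also have "\<dots> \<le> l * p ^ Suc N + (1 - l) * q ^ Suc N"
    using convex_combination_times_power_le[OF l pq] .
  finally show ?case .
qed simp

lemma power_convex_combination_less:
  fixes l p q :: real
  assumes l: "0 < l" "l < 1" and pq: "0 \<le> p" "0 \<le> q" "p \<noteq> q" and N: "2 \<le> N"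
  shows "(l * p + (1 - l) * q) ^ N < l * p ^ N + (1 - l) * q ^ N"
  using N
proof (induction N rule: dec_induct)
  case base
  have "l * p\<^sup>2 + (1 - l) * q\<^sup>2 - (l * p + (1 - l) * q)\<^sup>2 = l * (1 - l) * (p - q)\<^sup>2"
    by (simp add: algebra_simps power2_eq_square)
  moreover have "0 < l * (1 - l) * (p - q)\<^sup>2" using l pq by simp
  ultimately show ?case by linarith
next
  case (step N)
  have "0 < l * p + (1 - l) * q"
    using l pq by (cases "0 < p") (auto intro: add_pos_nonneg add_nonneg_pos)
  then have "(l * p + (1 - l) * q) ^ Suc N < (l * p + (1 - l) * q) * (l * p ^ N + (1 - l) * q ^ N)"
    using step.IH by simp
  also have "\<dots> \<le> l * p ^ Suc N + (1 - l) * q ^ Suc N"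
    using convex_combination_times_power_le l pq by simp
  finally show ?case .
qed

text \<open>Writing \<open>p + q\<close> as \<open>a + b\<close> times a convex combination of \<open>p/a\<close> and \<open>q/b\<close> turns
  convexity of \<open>t\<^sup>N\<close> into Minkowski's inequality; the bound integrates to \<open>(a + b)\<^sup>N\<close> when
  \<open>a\<close> and \<open>b\<close> are the \<open>L\<^sup>N\<close> norms of the summands.\<close>

definition minkowski_bound :: "nat \<Rightarrow> real \<Rightarrow> real \<Rightarrow> real \<Rightarrow> real \<Rightarrow> real" where
  "minkowski_bound N a b p q = (a + b) ^ N * (a / (a + b) * (p / a) ^ N + b / (a + b) * (q / b) ^ N)"

lemma minkowski_bound_eq:
  fixes a b :: real
  assumes "0 < a" "0 < b"
  shows "minkowski_bound N a b p q = (a + b) ^ N * (a / (a + b)) / a ^ N * p ^ N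
                                    + (a + b) ^ N * (b / (a + b)) / b ^ N * q ^ N"
  by (simp add: minkowski_bound_def power_divide algebra_simps)

lemma power_add_le_minkowski_bound:
  fixes a b p q :: real
  assumes ab: "0 < a" "0 < b" and pq: "0 \<le> p" "0 \<le> q"
  shows "(p + q) ^ N \<le> minkowski_bound N a b p q"
    and "2 \<le> N \<Longrightarrow> p / a \<noteq> q / b \<Longrightarrow> (p + q) ^ N < minkowski_bound N a b p q"
proof -
  define l where "l = a / (a + b)"
  have l: "0 < l" "l < 1" "1 - l = b / (a + b)"
    using ab by (simp_all add: l_def field_simps)
  have "(a + b) * (l * (p / a)) = p" "(a + b) * ((1 - l) * (q / b)) = q"
    using ab unfolding l(3) by (simp_all add: l_def)
  then have "p + q = (a + b) * (l * (p / a) + (1 - l) * (q / b))"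
    by (simp only: distrib_left)
  then have split: "(p + q) ^ N = (a + b) ^ N * (l * (p / a) + (1 - l) * (q / b)) ^ N"
    by (simp add: power_mult_distrib)
  have bound: "minkowski_bound N a b p q = (a + b) ^ N * (l * (p / a) ^ N + (1 - l) * (q / b) ^ N)"
    unfolding minkowski_bound_def l(3) by (simp add: l_def)
  have "0 \<le> p / a" "0 \<le> q / b" using ab pq by simp_all
  then show "(p + q) ^ N \<le> minkowski_bound N a b p q"
    using power_convex_combination_le[of l "p / a" "q / b" N] l ab
    unfolding split bound by (simp add: mult_left_mono)
  show "(p + q) ^ N < minkowski_bound N a b p q" if "2 \<le> N" "p / a \<noteq> q / b"
    using power_convex_combination_less[of l "p / a" "q / b" N] l ab that \<open>0 \<le> p / a\<close> \<open>0 \<le> q / b\<close>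
    unfolding split bound by simp
qed

lemma nn_integral_minkowski_bound:
  fixes f g :: "'a::euclidean_space \<Rightarrow> real"
  assumes B: "open B" and f: "continuous_on B f" "\<And>x. x \<in> B \<Longrightarrow> 0 \<le> f x"
    and g: "continuous_on B g" "\<And>x. x \<in> B \<Longrightarrow> 0 \<le> g x"
    and ab: "0 < a" "0 < b"
    and If: "(\<integral>\<^sup>+x. ennreal (indicator B x * f x ^ N) \<partial>lborel) = ennreal (a ^ N)"
    and Ig: "(\<integral>\<^sup>+x. ennreal (indicator B x * g x ^ N) \<partial>lborel) = ennreal (b ^ N)"
  shows "(\<integral>\<^sup>+x. ennreal (indicator B x * minkowski_bound N a b (f x) (g x)) \<partial>lborel) = ennreal ((a + b) ^ N)"
proof -
  define c where "c = (a + b) ^ N * (a / (a + b)) / a ^ N"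
  define d where "d = (a + b) ^ N * (b / (a + b)) / b ^ N"
  have cd: "0 \<le> c" "0 \<le> d" using ab by (simp_all add: c_def d_def)
  have pointwise: "ennreal (indicator B x * minkowski_bound N a b (f x) (g x))
      = ennreal c * ennreal (indicator B x * f x ^ N) + ennreal d * ennreal (indicator B x * g x ^ N)" for x
    using cd f(2) g(2) ab
    by (cases "x \<in> B") (simp_all add: minkowski_bound_eq c_def d_def ennreal_mult'[symmetric] ennreal_plus[symmetric] del: ennreal_plus)
  have "(\<integral>\<^sup>+x. ennreal (indicator B x * minkowski_bound N a b (f x) (g x)) \<partial>lborel)
      = ennreal c * ennreal (a ^ N) + ennreal d * ennreal (b ^ N)"
  proof -
    have "(\<lambda>x. ennreal (indicator B x * f x ^ N)) \<in> borel_measurable borel"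
         "(\<lambda>x. ennreal (indicator B x * g x ^ N)) \<in> borel_measurable borel"
      using B f(1) g(1) by (auto intro!: borel_measurable_indicator_mult_continuous continuous_intros)
    then show ?thesis
      unfolding pointwise by (simp add: nn_integral_add nn_integral_cmult If Ig)
  qed
  also have "\<dots> = ennreal (c * a ^ N + d * b ^ N)"
    using cd ab by (simp add: ennreal_plus ennreal_mult')
  also have "c * a ^ N + d * b ^ N = (a + b) ^ N"
    using ab by (simp add: c_def d_def) (simp add: add_divide_distrib[symmetric] distrib_left[symmetric])
  finally show ?thesis .
qed

lemma nn_integral_power_add_le:
  fixes f g :: "'a::euclidean_space \<Rightarrow> real"
  assumes B: "open B" and f: "continuous_on B f" "\<And>x. x \<in> B \<Longrightarrow> 0 \<le> f x"
    and g: "continuous_on B g" "\<And>x. x \<in> B \<Longrightarrow> 0 \<le> g x"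
    and ab: "0 < a" "0 < b"
    and If: "(\<integral>\<^sup>+x. ennreal (indicator B x * f x ^ N) \<partial>lborel) = ennreal (a ^ N)"
    and Ig: "(\<integral>\<^sup>+x. ennreal (indicator B x * g x ^ N) \<partial>lborel) = ennreal (b ^ N)"
  shows "(\<integral>\<^sup>+x. ennreal (indicator B x * (f x + g x) ^ N) \<partial>lborel) \<le> ennreal ((a + b) ^ N)"
proof -
  have "(\<integral>\<^sup>+x. ennreal (indicator B x * (f x + g x) ^ N) \<partial>lborel)
      \<le> (\<integral>\<^sup>+x. ennreal (indicator B x * minkowski_bound N a b (f x) (g x)) \<partial>lborel)"
    using power_add_le_minkowski_bound(1)[OF ab] f(2) g(2)
    by (intro nn_integral_mono ennreal_leI) (simp split: split_indicator)
  then show ?thesis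
    using nn_integral_minkowski_bound[OF B f g ab If Ig] by simp
qed

lemma nn_integral_power_add_eq_imp_proportional:
  fixes f g :: "'a::euclidean_space \<Rightarrow> real"
  assumes B: "open B" and f: "continuous_on B f" "\<And>x. x \<in> B \<Longrightarrow> 0 \<le> f x"
    and g: "continuous_on B g" "\<And>x. x \<in> B \<Longrightarrow> 0 \<le> g x"
    and ab: "0 < a" "0 < b" and N: "2 \<le> N"
    and If: "(\<integral>\<^sup>+x. ennreal (indicator B x * f x ^ N) \<partial>lborel) = ennreal (a ^ N)"
    and Ig: "(\<integral>\<^sup>+x. ennreal (indicator B x * g x ^ N) \<partial>lborel) = ennreal (b ^ N)"
    and eq: "(\<integral>\<^sup>+x. ennreal (indicator B x * (f x + g x) ^ N) \<partial>lborel) = ennreal ((a + b) ^ N)"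
    and x: "x \<in> B"
  shows "g x = (b / a) * f x"
proof -
  define F where "F x = indicator B x * (f x + g x) ^ N" for x
  define G where "G x = indicator B x * minkowski_bound N a b (f x) (g x)" for x
  have FG: "F x \<le> G x" for x
    using power_add_le_minkowski_bound(1)[OF ab] f(2) g(2)
    by (simp add: F_def G_def split: split_indicator)
  have F: "0 \<le> F x" for x
    using f(2) g(2) by (simp add: F_def split: split_indicator)
  have cont: "continuous_on B (\<lambda>x. minkowski_bound N a b (f x) (g x) - (f x + g x) ^ N)"
    using f(1) g(1) ab by (auto simp: minkowski_bound_def intro!: continuous_intros)
  have "(\<integral>\<^sup>+x. ennreal (G x) \<partial>lborel) = (\<integral>\<^sup>+x. ennreal (F x) + ennreal (G x - F x) \<partial>lborel)"
    using F FG by (intro nn_integral_cong) (simp add: ennreal_plus[symmetric] del: ennreal_plus)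
  also have "\<dots> = (\<integral>\<^sup>+x. ennreal (F x) \<partial>lborel) + (\<integral>\<^sup>+x. ennreal (G x - F x) \<partial>lborel)"
  proof (rule nn_integral_add)
    show "(\<lambda>x. ennreal (F x)) \<in> borel_measurable lborel"
      unfolding F_def using B f(1) g(1)
      by (simp add: borel_measurable_indicator_mult_continuous continuous_intros)
    show "(\<lambda>x. ennreal (G x - F x)) \<in> borel_measurable lborel"
      using borel_measurable_indicator_mult_continuous[OF B cont]
      by (simp add: F_def G_def right_diff_distrib)
  qed
  finally have "(\<integral>\<^sup>+x. ennreal (G x - F x) \<partial>lborel) = 0"
    using nn_integral_minkowski_bound[OF B f g ab If Ig] eq
    by (simp add: F_def G_def ennreal_add_left_cancel)
  then have "(\<integral>\<^sup>+x. ennreal (indicator B x * (minkowski_bound N a b (f x) (g x) - (f x + g x) ^ N)) \<partial>lborel) = 0"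
    by (simp add: F_def G_def right_diff_distrib)
  moreover have "0 \<le> minkowski_bound N a b (f y) (g y) - (f y + g y) ^ N" if "y \<in> B" for y
    using power_add_le_minkowski_bound(1)[OF ab f(2)[OF that] g(2)[OF that]] by simp
  ultimately have "minkowski_bound N a b (f x) (g x) - (f x + g x) ^ N = 0"
    using nn_integral_indicator_eq_0_imp_zero_on[OF B cont _ _ x] by blast
  then have "\<not> (f x + g x) ^ N < minkowski_bound N a b (f x) (g x)"
    by simp
  then have "f x / a = g x / b"
    using power_add_le_minkowski_bound(2)[OF ab f(2)[OF x] g(2)[OF x] N] by blast
  then show ?thesis using ab by (simp add: field_simps)
qed

lemma nn_integral_indicator_mult_power:
  fixes f :: "'a::euclidean_space \<Rightarrow> real"
  assumes B: "open B" and f: "continuous_on B f" and c: "0 \<le> c"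
  shows "(\<integral>\<^sup>+x. ennreal (indicator B x * (c * f x) ^ N) \<partial>lborel)
       = ennreal (c ^ N) * (\<integral>\<^sup>+x. ennreal (indicator B x * f x ^ N) \<partial>lborel)"
proof -
  have "ennreal (indicator B x * (c * f x) ^ N) = ennreal (c ^ N) * ennreal (indicator B x * f x ^ N)" for x
    using c by (simp add: power_mult_distrib ennreal_mult'[symmetric] mult.left_commute)
  moreover have "(\<lambda>x. ennreal (indicator B x * f x ^ N)) \<in> borel_measurable borel"
    using B f by (intro borel_measurable_indicator_mult_continuous continuous_intros)
  ultimately show ?thesis by (simp add: nn_integral_cmult)
qed

section \<open>Volume below a homogeneous function\<close>

text \<open>The volume of \<open>{x \<in> U. |x|\<^sup>n < H x}\<close> for a cone \<open>U\<close> and a \<open>0\<close>-homogeneous \<open>H\<close> is computed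
  without polar coordinates: both it and the integral of \<open>H\<close> over \<open>U \<inter> ball 0 1\<close> are turned into
  the same double integral of \<open>1/s\<close>, the inner slices being dilates of each other.\<close>

lemma scaleR_image_homogeneous_Collect:
  fixes U :: "'a::real_normed_vector set"
  assumes U: "\<And>x c. x \<in> U \<Longrightarrow> 0 < c \<Longrightarrow> c *\<^sub>R x \<in> U"
    and H: "\<And>x c. x \<in> U \<Longrightarrow> 0 < c \<Longrightarrow> H (c *\<^sub>R x) = H x" and c: "0 < c"
  shows "(\<lambda>x. c *\<^sub>R x) ` {x\<in>U. P (norm x) (H x)} = {x\<in>U. P (norm x / c) (H x)}"
proof (intro equalityI subsetI)
  fix x assume "x \<in> {x\<in>U. P (norm x / c) (H x)}"
  then have x: "x \<in> U" "P (norm x / c) (H x)" by auto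
  have "inverse c *\<^sub>R x \<in> {x\<in>U. P (norm x) (H x)}"
    using x c U[OF x(1)] H[OF x(1)] by (simp add: divide_inverse mult.commute)
  moreover have "x = c *\<^sub>R (inverse c *\<^sub>R x)" using c by simp
  ultimately show "x \<in> (\<lambda>x. c *\<^sub>R x) ` {x\<in>U. P (norm x) (H x)}" by blast
qed (use c U H in auto)

lemma emeasure_homogeneous_Collect_scale:
  fixes U :: "'a::euclidean_space set"
  assumes U: "\<And>x c. x \<in> U \<Longrightarrow> 0 < c \<Longrightarrow> c *\<^sub>R x \<in> U"
    and H: "\<And>x c. x \<in> U \<Longrightarrow> 0 < c \<Longrightarrow> H (c *\<^sub>R x) = H x" and c: "0 < c"
    and meas: "{x\<in>U. P (norm x) (H x)} \<in> sets lborel"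
  shows "emeasure lborel {x\<in>U. P (norm x / c) (H x)}
       = ennreal (c ^ DIM('a)) * emeasure lborel {x\<in>U. P (norm x) (H x)}"
  using emeasure_lborel_scaleR_image[OF meas c] scaleR_image_homogeneous_Collect[OF U H c] by simp

lemma nn_integral_inverse_indicator_rescale:
  fixes a b :: real
  assumes a: "0 \<le> a"
  shows "(\<integral>\<^sup>+s. ennreal (1 / s) * indicator {a<..<b} s \<partial>lborel)
       = (\<integral>\<^sup>+t. ennreal (1 / t) * indicator {t. 0 < t \<and> t < 1 \<and> a < t * b} t \<partial>lborel)"
proof (cases "0 < b")
  case False
  then have "{a<..<b} = {}" "{t. 0 < t \<and> t < 1 \<and> a < t * b} = {}"
    using a by (auto simp: not_less intro: order.trans[OF mult_nonneg_nonpos[of _ b] a])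
  then show ?thesis by simp
next
  case b: True
  have "(\<integral>\<^sup>+s. ennreal (1 / s) * indicator {a<..<b} s \<partial>lborel)
      = ennreal b * (\<integral>\<^sup>+t. ennreal (1 / (0 + b * t)) * indicator {a<..<b} (0 + b * t) \<partial>lborel)"
    using b by (subst nn_integral_real_affine[where c = b and t = 0]) auto
  also have "\<dots> = (\<integral>\<^sup>+t. ennreal b * (ennreal (1 / (b * t)) * indicator {a<..<b} (b * t)) \<partial>lborel)"
    by (simp add: nn_integral_cmult)
  also have "\<dots> = (\<integral>\<^sup>+t. ennreal (1 / t) * indicator {t. 0 < t \<and> t < 1 \<and> a < t * b} t \<partial>lborel)"
  proof (rule nn_integral_cong)
    fix t :: real
    have iff: "b * t \<in> {a<..<b} \<longleftrightarrow> t \<in> {t. 0 < t \<and> t < 1 \<and> a < t * b}"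
    proof -
      have "a < b * t \<Longrightarrow> 0 < t" using a b by (metis le_less_trans zero_less_mult_pos)
      then show ?thesis using b by (auto simp: mult.commute)
    qed
    show "ennreal b * (ennreal (1 / (b * t)) * indicator {a<..<b} (b * t))
        = ennreal (1 / t) * indicator {t. 0 < t \<and> t < 1 \<and> a < t * b} t"
    proof (cases "0 < t")
      case True
      then have "ennreal b * ennreal (1 / (b * t)) = ennreal (1 / t)"
        using b by (simp add: ennreal_mult'[symmetric])
      then show ?thesis using iff by (simp add: mult.assoc[symmetric] split: split_indicator)
    qed (use iff in \<open>auto split: split_indicator\<close>)
  qed
  finally show ?thesis .
qed

lemma nn_integral_cmult_indicator_slice:
  fixes W :: "('a::euclidean_space \<times> 'b::euclidean_space) set"
  assumes "open W"
  shows "(\<integral>\<^sup>+x. c * indicator W (x, s) \<partial>lborel) = c * emeasure lborel {x. (x, s) \<in> W}"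
proof -
  have "(\<lambda>x. c * indicator W (x, s)) = (\<lambda>x. c * indicator {x. (x, s) \<in> W} x)"
    by (auto simp: indicator_def)
  then show ?thesis using open_slice[OF assms] by (simp add: nn_integral_cmult_indicator)
qed

lemma borel_measurable_inverse_snd_indicator:
  fixes W :: "('a::euclidean_space \<times> real) set"
  assumes "open W"
  shows "(\<lambda>p. ennreal (1 / snd p) * indicator W p) \<in> borel_measurable (lborel \<Otimes>\<^sub>M lborel)"
proof (rule borel_measurable_times_ennreal)
  show "(\<lambda>p. ennreal (1 / snd p)) \<in> borel_measurable (lborel \<Otimes>\<^sub>M lborel)"
    by (rule measurable_compose[OF measurable_snd]) simp
  show "indicator W \<in> borel_measurable (lborel \<Otimes>\<^sub>M lborel)"
    using assms unfolding lborel_prod by simp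
qed

lemma continuous_on_Times_UNIV_fst:
  "continuous_on U H \<Longrightarrow> continuous_on (U \<times> UNIV) (\<lambda>p. H (fst p))"
  by (rule continuous_on_compose2) (auto intro!: continuous_intros)

lemma open_homogeneous_layers:
  fixes U :: "'a::real_normed_vector set"
  assumes U: "open U" and H: "continuous_on U H"
  shows "open {(x, s). x \<in> U \<and> norm x < 1 \<and> 0 < s \<and> s < H x}"
    and "open {(x, s). x \<in> U \<and> norm x ^ N < s \<and> s < H x}"
    and "open {(x, t). x \<in> U \<and> 0 < t \<and> t < 1 \<and> norm x ^ N < t * H x}"
proof -
  have "{(x, s). x \<in> U \<and> norm x < 1 \<and> 0 < s \<and> s < H x}
      = {p\<in>U \<times> UNIV. norm (fst p) < 1} \<inter> {p\<in>U \<times> UNIV. 0 < snd p} \<inter> {p\<in>U \<times> UNIV. snd p < H (fst p)}"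
    "{(x, s). x \<in> U \<and> norm x ^ N < s \<and> s < H x}
      = {p\<in>U \<times> UNIV. norm (fst p) ^ N < snd p} \<inter> {p\<in>U \<times> UNIV. snd p < H (fst p)}"
    "{(x, t). x \<in> U \<and> 0 < t \<and> t < 1 \<and> norm x ^ N < t * H x}
      = {p\<in>U \<times> UNIV. 0 < snd p} \<inter> {p\<in>U \<times> UNIV. snd p < 1}
        \<inter> {p\<in>U \<times> UNIV. norm (fst p) ^ N < snd p * H (fst p)}"
    by auto
  then show "open {(x, s). x \<in> U \<and> norm x < 1 \<and> 0 < s \<and> s < H x}"
    and "open {(x, s). x \<in> U \<and> norm x ^ N < s \<and> s < H x}"
    and "open {(x, t). x \<in> U \<and> 0 < t \<and> t < 1 \<and> norm x ^ N < t * H x}"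
    using U continuous_on_Times_UNIV_fst[OF H]
    by (auto intro!: open_Int open_Collect_less_on open_Times continuous_intros)
qed

lemma emeasure_homogeneous_slice_scale:
  fixes U :: "'a::euclidean_space set"
  assumes U: "open U" "\<And>x c. x \<in> U \<Longrightarrow> 0 < c \<Longrightarrow> c *\<^sub>R x \<in> U"
    and H: "continuous_on U H" "\<And>x c. x \<in> U \<Longrightarrow> 0 < c \<Longrightarrow> H (c *\<^sub>R x) = H x"
    and s: "0 < s"
  shows "emeasure lborel {x\<in>U. norm x ^ DIM('a) < s \<and> s < H x}
       = ennreal s * emeasure lborel {x\<in>U. norm x < 1 \<and> s < H x}"
proof -
  define c where "c = root DIM('a) s"
  have c: "0 < c" "c ^ DIM('a) = s" using s by (simp_all add: c_def real_root_pow_pos2)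
  have "norm x / c < 1 \<longleftrightarrow> norm x ^ DIM('a) < s" for x
    using c power_less_power_iff_base[of "norm x" c "DIM('a)"] by simp
  then have scaled: "{x\<in>U. norm x ^ DIM('a) < s \<and> s < H x} = {x\<in>U. norm x / c < 1 \<and> s < H x}"
    by auto
  have "open {x\<in>U. norm x < 1 \<and> s < H x}"
  proof -
    have "{x\<in>U. norm x < 1 \<and> s < H x} = {x\<in>U. norm x < 1} \<inter> {x\<in>U. s < H x}" by auto
    then show ?thesis
      by (auto intro!: open_Int open_Collect_less_on U(1) H(1) continuous_intros)
  qed
  then have "{x\<in>U. norm x < 1 \<and> s < H x} \<in> sets lborel" by simp
  from emeasure_homogeneous_Collect_scale[where U = U and H = H and P = "\<lambda>r h. r < 1 \<and> s < h",
      OF U(2) H(2) c(1) this]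
  show ?thesis unfolding scaled c(2) .
qed

lemma emeasure_homogeneous_subgraph_scale:
  fixes U :: "'a::euclidean_space set"
  assumes U: "open U" "\<And>x c. x \<in> U \<Longrightarrow> 0 < c \<Longrightarrow> c *\<^sub>R x \<in> U"
    and H: "continuous_on U H" "\<And>x c. x \<in> U \<Longrightarrow> 0 < c \<Longrightarrow> H (c *\<^sub>R x) = H x"
    and t: "0 < t"
  shows "emeasure lborel {x\<in>U. norm x ^ DIM('a) < t * H x}
       = ennreal t * emeasure lborel {x\<in>U. norm x ^ DIM('a) < H x}"
proof -
  define c where "c = root DIM('a) t"
  have c: "0 < c" "c ^ DIM('a) = t" using t by (simp_all add: c_def real_root_pow_pos2)
  have "(norm x / c) ^ DIM('a) < h \<longleftrightarrow> norm x ^ DIM('a) < t * h" for x h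
    using c t by (simp add: power_divide pos_divide_less_eq mult.commute)
  then have scaled: "{x\<in>U. norm x ^ DIM('a) < t * H x} = {x\<in>U. (norm x / c) ^ DIM('a) < H x}"
    by auto
  have "open {x\<in>U. norm x ^ DIM('a) < H x}"
    by (rule open_Collect_less_on[OF U(1)]) (auto intro!: continuous_intros H(1))
  then have "{x\<in>U. norm x ^ DIM('a) < H x} \<in> sets lborel" by simp
  from emeasure_homogeneous_Collect_scale[where U = U and H = H and P = "\<lambda>r h. r ^ DIM('a) < h",
      OF U(2) H(2) c(1) this]
  show ?thesis unfolding scaled c(2) .
qed

lemma nn_integral_homogeneous_eq_inverse_weighted:
  fixes U :: "'a::euclidean_space set"
  assumes U: "open U" "\<And>x c. x \<in> U \<Longrightarrow> 0 < c \<Longrightarrow> c *\<^sub>R x \<in> U"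
    and H: "continuous_on U H" "\<And>x c. x \<in> U \<Longrightarrow> 0 < c \<Longrightarrow> H (c *\<^sub>R x) = H x"
  shows "(\<integral>\<^sup>+x. indicator {x\<in>U. norm x < 1} x * ennreal (H x) \<partial>lborel)
       = (\<integral>\<^sup>+x. \<integral>\<^sup>+s. ennreal (1 / s) * indicator {(x, s). x \<in> U \<and> norm x ^ DIM('a) < s \<and> s < H x} (x, s)
            \<partial>lborel \<partial>lborel)"
proof -
  define W1 where "W1 = {(x, s). x \<in> U \<and> norm x < 1 \<and> 0 < s \<and> s < H x}"
  define W2 where "W2 = {(x, s). x \<in> U \<and> norm x ^ DIM('a) < s \<and> s < H x}"
  have "open W1" "open W2"
    using open_homogeneous_layers[OF U(1) H(1)] by (simp_all add: W1_def W2_def)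
  have "(\<integral>\<^sup>+x. indicator {x\<in>U. norm x < 1} x * ennreal (H x) \<partial>lborel)
      = (\<integral>\<^sup>+x. \<integral>\<^sup>+s. indicator W1 (x, s) \<partial>lborel \<partial>lborel)"
  proof (rule nn_integral_cong)
    fix x
    have "(\<integral>\<^sup>+s. indicator W1 (x, s) \<partial>lborel)
        = indicator {x\<in>U. norm x < 1} x * (\<integral>\<^sup>+s. indicator {0<..<H x} s \<partial>lborel)"
      by (cases "x \<in> U \<and> norm x < 1") (auto simp: W1_def indicator_def)
    also have "\<dots> = indicator {x\<in>U. norm x < 1} x * ennreal (H x)"
      by (cases "0 \<le> H x") (simp_all add: ennreal_neg)
    finally show "indicator {x\<in>U. norm x < 1} x * ennreal (H x) = (\<integral>\<^sup>+s. indicator W1 (x, s) \<partial>lborel)"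
      by simp
  qed
  also have "\<dots> = (\<integral>\<^sup>+s. \<integral>\<^sup>+x. indicator W1 (x, s) \<partial>lborel \<partial>lborel)"
    using \<open>open W1\<close> by (intro lborel_pair.Fubini'[symmetric]) (simp add: split_beta' lborel_prod)
  also have "\<dots> = (\<integral>\<^sup>+s. \<integral>\<^sup>+x. ennreal (1 / s) * indicator W2 (x, s) \<partial>lborel \<partial>lborel)"
  proof (rule nn_integral_cong)
    fix s :: real
    show "(\<integral>\<^sup>+x. indicator W1 (x, s) \<partial>lborel) = (\<integral>\<^sup>+x. ennreal (1 / s) * indicator W2 (x, s) \<partial>lborel)"
    proof (cases "0 < s")
      case True
      then show ?thesis
        using nn_integral_cmult_indicator_slice[OF \<open>open W1\<close>, where c = 1]
          nn_integral_cmult_indicator_slice[OF \<open>open W2\<close>]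
          emeasure_homogeneous_slice_scale[OF U H True]
        by (simp add: W1_def W2_def mult.assoc[symmetric] ennreal_mult'[symmetric])
    next
      case False
      then have "{x. (x, s) \<in> W1} = {}" "{x. (x, s) \<in> W2} = {}"
        using le_less_trans[OF zero_le_power[OF norm_ge_zero]] by (force simp: W1_def W2_def)+
      then show ?thesis
        using nn_integral_cmult_indicator_slice[OF \<open>open W1\<close>, where c = 1]
          nn_integral_cmult_indicator_slice[OF \<open>open W2\<close>] by simp
    qed
  qed
  also have "\<dots> = (\<integral>\<^sup>+x. \<integral>\<^sup>+s. ennreal (1 / s) * indicator W2 (x, s) \<partial>lborel \<partial>lborel)"
    using borel_measurable_inverse_snd_indicator[OF \<open>open W2\<close>]
    by (intro lborel_pair.Fubini') (simp add: split_beta')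
  finally show ?thesis by (simp add: W2_def)
qed

lemma emeasure_homogeneous_subgraph_eq_inverse_weighted:
  fixes U :: "'a::euclidean_space set"
  assumes U: "open U" "\<And>x c. x \<in> U \<Longrightarrow> 0 < c \<Longrightarrow> c *\<^sub>R x \<in> U"
    and H: "continuous_on U H" "\<And>x c. x \<in> U \<Longrightarrow> 0 < c \<Longrightarrow> H (c *\<^sub>R x) = H x"
  shows "(\<integral>\<^sup>+x. \<integral>\<^sup>+t. ennreal (1 / t)
              * indicator {(x, t). x \<in> U \<and> 0 < t \<and> t < 1 \<and> norm x ^ DIM('a) < t * H x} (x, t)
            \<partial>lborel \<partial>lborel)
       = emeasure lborel {x\<in>U. norm x ^ DIM('a) < H x}"
proof -
  define S where "S = {x\<in>U. norm x ^ DIM('a) < H x}"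
  define W where "W = {(x, t). x \<in> U \<and> 0 < t \<and> t < 1 \<and> norm x ^ DIM('a) < t * H x}"
  have "open W"
    using open_homogeneous_layers[OF U(1) H(1)] by (simp add: W_def)
  have slice: "emeasure lborel {x. (x, t) \<in> W} = ennreal t * emeasure lborel S"
    if "0 < t" "t < 1" for t
    using emeasure_homogeneous_subgraph_scale[OF U H \<open>0 < t\<close>] that by (simp add: S_def W_def)
  have "(\<integral>\<^sup>+x. \<integral>\<^sup>+t. ennreal (1 / t) * indicator W (x, t) \<partial>lborel \<partial>lborel)
      = (\<integral>\<^sup>+t. \<integral>\<^sup>+x. ennreal (1 / t) * indicator W (x, t) \<partial>lborel \<partial>lborel)"
    using borel_measurable_inverse_snd_indicator[OF \<open>open W\<close>]
    by (intro lborel_pair.Fubini'[symmetric]) (simp add: split_beta')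
  also have "\<dots> = (\<integral>\<^sup>+t. emeasure lborel S * indicator {0<..<1::real} t \<partial>lborel)"
  proof (rule nn_integral_cong)
    fix t :: real
    show "(\<integral>\<^sup>+x. ennreal (1 / t) * indicator W (x, t) \<partial>lborel) = emeasure lborel S * indicator {0<..<1::real} t"
    proof (cases "0 < t \<and> t < 1")
      case True
      then show ?thesis
        by (simp add: nn_integral_cmult_indicator_slice[OF \<open>open W\<close>] slice
                      mult.assoc[symmetric] ennreal_mult'[symmetric])
    next
      case False
      then have "{x. (x, t) \<in> W} = {}" by (auto simp: W_def)
      then show ?thesis
        using False by (simp add: nn_integral_cmult_indicator_slice[OF \<open>open W\<close>])
    qed
  qed
  also have "\<dots> = emeasure lborel S"
    by (simp add: nn_integral_cmult)
  finally show ?thesis by (simp add: S_def W_def)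
qed

lemma emeasure_homogeneous_subgraph:
  fixes U :: "'a::euclidean_space set"
  assumes U: "open U" "\<And>x c. x \<in> U \<Longrightarrow> 0 < c \<Longrightarrow> c *\<^sub>R x \<in> U"
    and H: "continuous_on U H" "\<And>x c. x \<in> U \<Longrightarrow> 0 < c \<Longrightarrow> H (c *\<^sub>R x) = H x"
  shows "emeasure lborel {x\<in>U. norm x ^ DIM('a) < H x}
       = (\<integral>\<^sup>+x. indicator {x\<in>U. norm x < 1} x * ennreal (H x) \<partial>lborel)"
proof -
  have "(\<integral>\<^sup>+s. ennreal (1 / s) * indicator {(x, s). x \<in> U \<and> norm x ^ DIM('a) < s \<and> s < H x} (x, s) \<partial>lborel)
      = (\<integral>\<^sup>+t. ennreal (1 / t)
            * indicator {(x, t). x \<in> U \<and> 0 < t \<and> t < 1 \<and> norm x ^ DIM('a) < t * H x} (x, t) \<partial>lborel)" for x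
    using nn_integral_inverse_indicator_rescale[of "norm x ^ DIM('a)" "H x"]
    by (cases "x \<in> U") (simp_all add: indicator_def greaterThanLessThan_def lessThan_def greaterThan_def)
  then show ?thesis
    using nn_integral_homogeneous_eq_inverse_weighted[OF U H]
      emeasure_homogeneous_subgraph_eq_inverse_weighted[OF U H] by simp
qed

section \<open>The radial function of a \<open>C\<close>-close set\<close>

lemma conic_interior_scaleR:
  fixes C :: "'a::real_normed_vector set"
  assumes "conic C" "x \<in> interior C" "0 < c"
  shows "c *\<^sub>R x \<in> interior C"
proof -
  have "(\<lambda>x. c *\<^sub>R x) ` interior C \<subseteq> C"
    using assms(1,3) interior_subset[of C] by (auto intro!: conicD[of C])
  moreover have "open ((\<lambda>x. c *\<^sub>R x) ` interior C)"
    using assms(3) by (intro open_scaling) auto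
  ultimately have "(\<lambda>x. c *\<^sub>R x) ` interior C \<subseteq> interior C"
    by (rule interior_maximal)
  then show ?thesis using assms(2) by blast
qed

lemma convex_cone_add_interior:
  fixes C :: "'a::real_normed_vector set"
  assumes "convex_cone C" "x \<in> C" "y \<in> interior C"
  shows "x + y \<in> interior C"
proof -
  have "(\<lambda>z. x + z) ` interior C \<subseteq> C"
    using assms(1,2) interior_subset unfolding convex_cone_iff by blast
  moreover have "open ((\<lambda>z. x + z) ` interior C)"
    by (intro open_translation) auto
  ultimately have "(\<lambda>z. x + z) ` interior C \<subseteq> interior C"
    by (rule interior_maximal)
  then show ?thesis using assms(3) by blast
qed

lemma zero_notin_interior_pointed:
  fixes C :: "'a::euclidean_space set"
  assumes "C \<inter> uminus ` C = {0}"
  shows "0 \<notin> interior C"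
proof
  assume "0 \<in> interior C"
  then obtain e where e: "0 < e" "ball 0 e \<subseteq> C" by (meson mem_interior)
  obtain b :: 'a where b: "b \<in> Basis" using nonempty_Basis by blast
  define x where "x = (e / 2) *\<^sub>R b"
  have "norm x = e / 2" using b e by (simp add: x_def)
  then have "x \<in> C" "- x \<in> C" using e by (auto simp: dist_norm)
  then have "x \<in> C \<inter> uminus ` C" by (metis IntI image_eqI minus_minus)
  then show False using assms \<open>norm x = e / 2\<close> e by auto
qed

locale C_close_set =
  fixes C AA :: "'a::euclidean_space set"
  assumes pointed: "pointed_cone C" and close: "C_close C AA"
begin

abbreviation "U \<equiv> interior C"
abbreviation "\<rho> \<equiv> radial AA"

lemma convex_cone_C: "convex_cone C" and closed_C: "closed C" and interior_C_nonempty: "U \<noteq> {}"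
  and pointed_C: "C \<inter> uminus ` C = {0}"
  using pointed unfolding pointed_cone_def by blast+

lemma cone_scaleR: "x \<in> C \<Longrightarrow> 0 \<le> c \<Longrightarrow> c *\<^sub>R x \<in> C"
  using convex_cone_C unfolding convex_cone_def by (blast intro: conicD)

lemma convex_C: "convex C"
  using convex_cone_C unfolding convex_cone_def by blast

lemma interior_scaleR: "x \<in> U \<Longrightarrow> 0 < c \<Longrightarrow> c *\<^sub>R x \<in> U"
  using convex_cone_C unfolding convex_cone_def by (blast intro: conic_interior_scaleR)

lemma zero_notin_interior: "0 \<notin> U"
  using zero_notin_interior_pointed[OF pointed_C] .

lemma closed_AA: "closed AA" and convex_AA: "convex AA" and AA_subset: "AA \<subseteq> C" and zero_notin_AA: "0 \<notin> AA"
  and AA_scaleR: "x \<in> AA \<Longrightarrow> 1 \<le> l \<Longrightarrow> l *\<^sub>R x \<in> AA" and rec_cone_AA: "rec_cone AA = C"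
  and lmeasurable_C_diff_AA: "C - AA \<in> lmeasurable"
  using close unfolding C_close_def by blast+

lemma AA_nonempty: "AA \<noteq> {}"
proof
  assume "AA = {}"
  then have C: "C = UNIV" using rec_cone_AA by (simp add: rec_cone_def)
  obtain b :: 'a where b: "b \<in> Basis" using nonempty_Basis by blast
  have "b \<in> C \<inter> uminus ` C" unfolding C by (simp add: image_iff)
  then show False using b pointed_C nonzero_Basis by auto
qed

lemma AA_norm_lower_bound:
  obtains d where "0 < d" "\<And>y. y \<in> AA \<Longrightarrow> d \<le> norm y"
proof -
  have "0 \<in> - AA" "open (- AA)" using zero_notin_AA closed_AA by auto
  then obtain d where "0 < d" "ball 0 d \<subseteq> - AA" using open_contains_ball by blast
  then show ?thesis using that by (force simp: dist_norm)
qed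

lemma ray_meets_AA:
  assumes "x \<in> U"
  shows "\<exists>r>0. r *\<^sub>R x \<in> AA"
proof -
  obtain a where a: "a \<in> AA" using AA_nonempty by blast
  obtain e where e: "0 < e" "ball x e \<subseteq> C" using assms by (meson mem_interior)
  define r where "r = (norm a + 1) / e"
  have r: "0 < r" using e by (simp add: r_def add_nonneg_pos)
  have "0 < norm a + 1" by (simp add: add_nonneg_pos)
  then have "norm (inverse r *\<^sub>R a) < e"
    using e by (simp add: r_def field_simps)
  then have "x - inverse r *\<^sub>R a \<in> C" using e by (auto simp: dist_norm)
  then have "r *\<^sub>R (x - inverse r *\<^sub>R a) \<in> C" by (rule cone_scaleR) (use r in simp)
  then have "r *\<^sub>R x - a \<in> rec_cone AA" using r rec_cone_AA by (simp add: scaleR_right_diff_distrib)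
  then have "\<forall>t::real\<ge>0. a + t *\<^sub>R (r *\<^sub>R x - a) \<in> AA" using a unfolding rec_cone_def by blast
  then have "a + 1 *\<^sub>R (r *\<^sub>R x - a) \<in> AA" using zero_le_one by blast
  then show ?thesis using r by auto
qed

lemma ray_coefficient_pos:
  assumes "x \<in> U" "r *\<^sub>R x \<in> AA"
  shows "0 < r"
proof (rule ccontr)
  assume "\<not> 0 < r"
  then have "(- r) *\<^sub>R x \<in> C"
    using assms(1) interior_subset cone_scaleR[of x "- r"] by auto
  then have "r *\<^sub>R x \<in> uminus ` C"
    using image_eqI[of "r *\<^sub>R x" uminus "(- r) *\<^sub>R x" C] by simp
  moreover have "r *\<^sub>R x \<in> C" using assms(2) AA_subset by blast
  ultimately have "r *\<^sub>R x = 0" using pointed_C by blast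
  then show False using assms(2) zero_notin_AA by metis
qed

lemma radial_pos: "x \<in> U \<Longrightarrow> 0 < \<rho> x"
  and radial_mem: "x \<in> U \<Longrightarrow> \<rho> x *\<^sub>R x \<in> AA"
  and scaleR_mem_iff_radial_le: "x \<in> U \<Longrightarrow> r *\<^sub>R x \<in> AA \<longleftrightarrow> \<rho> x \<le> r"
proof -
  assume x: "x \<in> U"
  obtain d where d: "0 < d" "\<And>y. y \<in> AA \<Longrightarrow> d \<le> norm y" using AA_norm_lower_bound by blast
  have x0: "x \<noteq> 0" using x zero_notin_interior by auto
  define S where "S = {r. r *\<^sub>R x \<in> AA}"
  have "{r. 0 < r \<and> r *\<^sub>R x \<in> AA} = S"
    using ray_coefficient_pos[OF x] by (auto simp: S_def)
  then have radial_eq: "\<rho> x = Inf S"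
    unfolding radial_def by simp
  have lb: "d / norm x \<le> r" if "r \<in> S" for r
  proof -
    have "0 < r" "d \<le> norm (r *\<^sub>R x)"
      using ray_coefficient_pos[OF x] d(2) that unfolding S_def by blast+
    then show ?thesis using x0 by (simp add: field_simps)
  qed
  have ne: "S \<noteq> {}" using ray_meets_AA[OF x] by (auto simp: S_def)
  have bdd: "bdd_below S" unfolding bdd_below_def using lb by blast
  have "closed S"
    unfolding S_def using continuous_closed_vimage[OF closed_AA, of "\<lambda>r. r *\<^sub>R x"]
    by (simp add: vimage_def continuous_intros)
  then have Inf: "Inf S \<in> S" using ne bdd closed_contains_Inf by blast
  have "0 < d / norm x" using d x0 by simp
  also have "\<dots> \<le> Inf S" using ne lb by (simp add: cInf_greatest)
  finally show "0 < \<rho> x" unfolding radial_eq .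
  then show mem: "\<rho> x *\<^sub>R x \<in> AA" using Inf radial_eq by (simp add: S_def)
  show "r *\<^sub>R x \<in> AA \<longleftrightarrow> \<rho> x \<le> r"
  proof
    assume "r *\<^sub>R x \<in> AA"
    then show "\<rho> x \<le> r" using radial_eq bdd by (simp add: S_def cInf_lower)
  next
    assume "\<rho> x \<le> r"
    then have "(r / \<rho> x) *\<^sub>R (\<rho> x *\<^sub>R x) \<in> AA"
      using \<open>0 < \<rho> x\<close> by (intro AA_scaleR[OF mem]) simp
    then show "r *\<^sub>R x \<in> AA" using \<open>0 < \<rho> x\<close> by simp
  qed
qed

lemma mem_iff_radial_le: "x \<in> U \<Longrightarrow> x \<in> AA \<longleftrightarrow> \<rho> x \<le> 1"
  using scaleR_mem_iff_radial_le[of x 1] by simp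

lemma radial_scaleR:
  assumes "x \<in> U" "0 < c"
  shows "\<rho> (c *\<^sub>R x) = \<rho> x / c"
proof -
  have cx: "c *\<^sub>R x \<in> U" using interior_scaleR assms by blast
  have "(\<rho> (c *\<^sub>R x) * c) *\<^sub>R x \<in> AA" using radial_mem[OF cx] by simp
  then have "\<rho> x \<le> \<rho> (c *\<^sub>R x) * c" using scaleR_mem_iff_radial_le[OF assms(1)] by blast
  moreover have "(\<rho> x / c) *\<^sub>R (c *\<^sub>R x) \<in> AA" using radial_mem[OF assms(1)] assms(2) by simp
  then have "\<rho> (c *\<^sub>R x) \<le> \<rho> x / c" using scaleR_mem_iff_radial_le[OF cx] by blast
  ultimately show ?thesis using assms(2) by (simp add: field_simps)
qed

lemma concave_on_inverse_radial: "concave_on U (\<lambda>x. 1 / \<rho> x)"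
  unfolding concave_on_iff
proof (intro conjI ballI allI impI convex_interior convex_C)
  fix x y and u v :: real
  assume x: "x \<in> U" and y: "y \<in> U" and uv: "0 \<le> u" "0 \<le> v" "u + v = 1"
  define z where "z = u *\<^sub>R x + v *\<^sub>R y"
  have z: "z \<in> U" using convex_interior[OF convex_C] x y uv unfolding z_def convex_def by blast
  define p where "p = 1 / \<rho> x"
  define q where "q = 1 / \<rho> y"
  have pq: "0 < p" "0 < q" using radial_pos[OF x] radial_pos[OF y] by (simp_all add: p_def q_def)
  define s where "s = u * p + v * q"
  have s: "0 < s" using pq uv unfolding s_def
    by (cases "0 < u") (auto intro: add_pos_nonneg add_nonneg_pos)
  have "(u * p / s) *\<^sub>R ((1 / p) *\<^sub>R x) + (v * q / s) *\<^sub>R ((1 / q) *\<^sub>R y) \<in> AA"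
  proof (rule convexD[OF convex_AA])
    show "(1 / p) *\<^sub>R x \<in> AA" "(1 / q) *\<^sub>R y \<in> AA"
      using radial_mem[OF x] radial_mem[OF y] by (simp_all add: p_def q_def)
    show "0 \<le> u * p / s" "0 \<le> v * q / s" using uv pq s by simp_all
    show "u * p / s + v * q / s = 1" using s by (simp add: s_def add_divide_distrib[symmetric])
  qed
  also have "(u * p / s) *\<^sub>R ((1 / p) *\<^sub>R x) + (v * q / s) *\<^sub>R ((1 / q) *\<^sub>R y) = (1 / s) *\<^sub>R z"
    using pq s by (simp add: z_def scaleR_add_right)
  finally have "\<rho> z \<le> 1 / s" using scaleR_mem_iff_radial_le[OF z] by blast
  then have "s \<le> 1 / \<rho> z" using radial_pos[OF z] s by (simp add: field_simps)
  then show "u * (1 / \<rho> x) + v * (1 / \<rho> y) \<le> 1 / \<rho> (u *\<^sub>R x + v *\<^sub>R y)"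
    by (simp add: s_def p_def q_def z_def)
qed

lemma continuous_on_radial: "continuous_on U \<rho>"
proof -
  have "convex_on U (\<lambda>x. - (1 / \<rho> x))"
    using concave_on_inverse_radial by (simp add: concave_on_def)
  then have "continuous_on U (\<lambda>x. - (1 / \<rho> x))"
    by (rule convex_on_continuous[OF open_interior])
  then have "continuous_on U (\<lambda>x. 1 / \<rho> x)"
    using continuous_on_minus by fastforce
  then have "continuous_on U (\<lambda>x. 1 / (1 / \<rho> x))"
    by (rule continuous_on_divide[OF continuous_on_const]) (use radial_pos in fastforce)
  then show ?thesis
    by (rule continuous_on_eq) (use radial_pos in auto)
qed

lemma closure_AA_Int_interior: "closure (AA \<inter> U) = AA"
proof
  show "closure (AA \<inter> U) \<subseteq> AA" using closed_AA by (simp add: closure_minimal)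
  show "AA \<subseteq> closure (AA \<inter> U)"
  proof
    fix x assume x: "x \<in> AA"
    obtain u where u: "u \<in> U" using interior_C_nonempty by blast
    show "x \<in> closure (AA \<inter> U)"
      unfolding closure_approachable
    proof (intro allI impI)
      fix e :: real assume e: "0 < e"
      define t where "t = e / (norm u + 1)"
      have t: "0 < t" using e by (simp add: t_def add_nonneg_pos)
      have "u \<in> rec_cone AA" using u interior_subset rec_cone_AA by blast
      then have "x + t *\<^sub>R u \<in> AA" using x t unfolding rec_cone_def by simp
      moreover have "x + t *\<^sub>R u \<in> U"
        using x AA_subset convex_cone_add_interior[OF convex_cone_C _ interior_scaleR[OF u t]] by blast
      moreover have "0 < norm u + 1" by (simp add: add_nonneg_pos)
      then have "dist (x + t *\<^sub>R u) x < e"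
        using t e by (simp add: dist_norm t_def field_simps)
      ultimately show "\<exists>y\<in>AA \<inter> U. dist y x < e" by blast
    qed
  qed
qed

text \<open>\<open>radial_dir x = \<rho>(x / |x|)\<close>: the radial function on directions, extended \<open>0\<close>-homogeneously.\<close>

definition radial_dir :: "'a \<Rightarrow> real" where
  "radial_dir x = norm x * \<rho> x"

lemma radial_dir_pos:
  assumes "x \<in> U"
  shows "0 < radial_dir x"
proof -
  have "x \<noteq> 0" using assms zero_notin_interior by auto
  then show ?thesis using radial_pos[OF assms] by (simp add: radial_dir_def)
qed

lemma continuous_on_radial_dir: "continuous_on U radial_dir"
  unfolding radial_dir_def by (intro continuous_intros continuous_on_radial)

lemma radial_dir_scaleR: "x \<in> U \<Longrightarrow> 0 < c \<Longrightarrow> radial_dir (c *\<^sub>R x) = radial_dir x"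
  by (simp add: radial_dir_def radial_scaleR)

lemma interior_diff_AA_eq: "U - AA = {x\<in>U. norm x ^ DIM('a) < radial_dir x ^ DIM('a)}"
proof -
  have "x \<notin> AA \<longleftrightarrow> norm x ^ DIM('a) < radial_dir x ^ DIM('a)" if x: "x \<in> U" for x
  proof -
    have "0 < norm x" using x zero_notin_interior by auto
    then have "norm x ^ DIM('a) < radial_dir x ^ DIM('a) \<longleftrightarrow> 1 < \<rho> x"
      using radial_dir_pos[OF x] by (simp add: power_less_power_iff_base radial_dir_def)
    then show ?thesis using mem_iff_radial_le[OF x] by linarith
  qed
  then show ?thesis by auto
qed

abbreviation "B \<equiv> {x\<in>U. norm x < 1}"

lemma open_B: "open B"
  by (rule open_Collect_less_on[OF open_interior]) (auto intro!: continuous_intros)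

lemma C_diff_interior_subset_frontier: "C - U \<subseteq> frontier C"
  using closed_C by (simp add: frontier_def closure_closed)

lemma negligible_frontier_C: "negligible (frontier C)"
  by (rule negligible_convex_frontier[OF convex_C])

lemma open_interior_diff_AA: "open (U - AA)"
  using closed_AA by (intro open_Diff open_interior)

lemma lmeasurable_interior_diff_AA: "U - AA \<in> lmeasurable"
  using open_interior_diff_AA interior_subset
  by (intro fmeasurableI2[OF lmeasurable_C_diff_AA]) auto

lemma measure_interior_diff_AA: "measure lebesgue (U - AA) = measure lebesgue (C - AA)"
proof (rule antisym)
  show "measure lebesgue (C - AA) \<le> measure lebesgue (U - AA)"
    using C_diff_interior_subset_frontier
    by (intro measure_le_of_subset_Un_negligible[OF lmeasurable_interior_diff_AA negligible_frontier_C]) blast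
  show "measure lebesgue (U - AA) \<le> measure lebesgue (C - AA)"
    using interior_subset
    by (intro measure_le_of_subset_Un_negligible[OF lmeasurable_C_diff_AA negligible_empty]) blast
qed

lemma nn_integral_radial_dir_power:
  "(\<integral>\<^sup>+x. ennreal (indicator B x * radial_dir x ^ DIM('a)) \<partial>lborel) = ennreal (measure lebesgue (C - AA))"
proof -
  have "(\<integral>\<^sup>+x. ennreal (indicator B x * radial_dir x ^ DIM('a)) \<partial>lborel)
      = (\<integral>\<^sup>+x. indicator B x * ennreal (radial_dir x ^ DIM('a)) \<partial>lborel)"
    by (intro nn_integral_cong) (simp split: split_indicator)
  also have "\<dots> = emeasure lborel (U - AA)"
    unfolding interior_diff_AA_eq
    by (rule emeasure_homogeneous_subgraph[symmetric])
       (auto intro!: continuous_intros continuous_on_radial_dir simp: interior_scaleR radial_dir_scaleR)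
  also have "\<dots> = emeasure lebesgue (U - AA)"
    using open_interior_diff_AA by simp
  also have "\<dots> = ennreal (measure lebesgue (C - AA))"
    using lmeasurable_interior_diff_AA measure_interior_diff_AA by (simp add: emeasure_eq_measure2)
  finally show ?thesis .
qed

lemma measure_C_diff_AA_pos: "0 < measure lebesgue (C - AA)"
proof -
  obtain u where u: "u \<in> U" using interior_C_nonempty by blast
  obtain d where d: "0 < d" "\<And>y. y \<in> AA \<Longrightarrow> d \<le> norm y" using AA_norm_lower_bound by blast
  have "0 < norm u" using u zero_notin_interior by auto
  define t where "t = d / (2 * norm u)"
  have t: "0 < t" using d \<open>0 < norm u\<close> by (simp add: t_def)
  have "norm (t *\<^sub>R u) < d" using t \<open>0 < norm u\<close> d by (simp add: t_def)
  then have "t *\<^sub>R u \<in> U - AA" using d(2) interior_scaleR[OF u t] by force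
  then have "\<not> negligible (U - AA)" using open_not_negligible[OF open_interior_diff_AA] by blast
  then have "measure lebesgue (U - AA) \<noteq> 0"
    using lmeasurable_interior_diff_AA negligible_iff_measure0 by blast
  then show ?thesis using measure_interior_diff_AA measure_nonneg[of lebesgue "C - AA"] by linarith
qed

end

section \<open>Radial sums and co-sums\<close>

locale C_close_pair =
  fixes C AA1 AA2 :: "'a::euclidean_space set"
  assumes pointed: "pointed_cone C" and close1: "C_close C AA1" and close2: "C_close C AA2"
begin

sublocale A1: C_close_set C AA1 using pointed close1 by unfold_locales
sublocale A2: C_close_set C AA2 using pointed close2 by unfold_locales

abbreviation "U \<equiv> interior C"

text \<open>The parts of the radial sum and co-sum inside \<open>int C\<close>; they determine both sets up to the
  null boundary of \<open>C\<close>.\<close>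

definition radial_sum_int :: "'a set" where
  "radial_sum_int = {x\<in>U. A1.\<rho> x + A2.\<rho> x \<le> 1}"

definition radial_cosum_int :: "'a set" where
  "radial_cosum_int = {x\<in>U. 1 < A1.\<rho> x + A2.\<rho> x}"

definition AA_sum :: "'a set" where
  "AA_sum = {a + b | a b. a \<in> AA1 \<and> b \<in> AA2}"

lemma radial_sum_generators_eq:
  "{l *\<^sub>R u | l u. u \<in> Omega C \<and> radial AA1 u + radial AA2 u \<le> l} = radial_sum_int"
proof (intro equalityI subsetI)
  fix x assume "x \<in> {l *\<^sub>R u | l u. u \<in> Omega C \<and> radial AA1 u + radial AA2 u \<le> l}"
  then obtain l u where x: "x = l *\<^sub>R u" "u \<in> U" "A1.\<rho> u + A2.\<rho> u \<le> l"
    by (auto simp: Omega_def)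
  have l: "0 < l" using A1.radial_pos[OF x(2)] A2.radial_pos[OF x(2)] x(3) by linarith
  have "A1.\<rho> x + A2.\<rho> x = (A1.\<rho> u + A2.\<rho> u) / l"
    using A1.radial_scaleR[OF x(2) l] A2.radial_scaleR[OF x(2) l] x(1) by (simp add: add_divide_distrib)
  also have "\<dots> \<le> 1" using x(3) l by simp
  finally show "x \<in> radial_sum_int"
    using A1.interior_scaleR[OF x(2) l] x(1) by (simp add: radial_sum_int_def)
next
  fix x assume "x \<in> radial_sum_int"
  then have x: "x \<in> U" "A1.\<rho> x + A2.\<rho> x \<le> 1" by (auto simp: radial_sum_int_def)
  have n: "0 < norm x" using x A1.zero_notin_interior by auto
  define u where "u = (1 / norm x) *\<^sub>R x"
  have u: "u \<in> Omega C"
    using A1.interior_scaleR[OF x(1), of "1 / norm x"] n by (simp add: u_def Omega_def)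
  have "A1.\<rho> u = norm x * A1.\<rho> x" "A2.\<rho> u = norm x * A2.\<rho> x"
    using A1.radial_scaleR[OF x(1), of "1 / norm x"] A2.radial_scaleR[OF x(1), of "1 / norm x"] n
    by (simp_all add: u_def)
  then have "radial AA1 u + radial AA2 u \<le> norm x"
    using x(2) n by (simp add: distrib_left[symmetric] mult_le_cancel_left1)
  moreover have "x = norm x *\<^sub>R u" using n by (simp add: u_def)
  ultimately show "x \<in> {l *\<^sub>R u | l u. u \<in> Omega C \<and> radial AA1 u + radial AA2 u \<le> l}"
    using u by blast
qed

lemma radial_sum_eq_closure: "radial_sum C AA1 AA2 = closure radial_sum_int"
  unfolding radial_sum_def radial_sum_generators_eq ..

lemma open_radial_cosum_int: "open radial_cosum_int"
  unfolding radial_cosum_int_def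
  by (rule open_Collect_less_on[OF open_interior])
     (auto intro!: continuous_intros A1.continuous_on_radial A2.continuous_on_radial)

lemma closure_radial_sum_int_Int_interior: "closure radial_sum_int \<inter> U = radial_sum_int"
proof (intro equalityI subsetI)
  fix x assume x: "x \<in> closure radial_sum_int \<inter> U"
  have "radial_cosum_int \<inter> radial_sum_int = {}"
    by (auto simp: radial_sum_int_def radial_cosum_int_def)
  then have "radial_cosum_int \<inter> closure radial_sum_int = {}"
    using open_Int_closure_eq_empty[OF open_radial_cosum_int] by blast
  then show "x \<in> radial_sum_int"
    using x by (auto simp: radial_sum_int_def radial_cosum_int_def)
next
  fix x assume "x \<in> radial_sum_int"
  then show "x \<in> closure radial_sum_int \<inter> U"
    using closure_subset[of radial_sum_int] by (auto simp: radial_sum_int_def)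
qed

lemma radial_cosum_int_subset: "radial_cosum_int \<subseteq> radial_cosum C AA1 AA2"
  and radial_cosum_subset: "radial_cosum C AA1 AA2 \<subseteq> radial_cosum_int \<union> frontier C"
proof -
  have eq: "radial_cosum_int = U - radial_sum_int"
    by (auto simp: radial_sum_int_def radial_cosum_int_def)
  show "radial_cosum_int \<subseteq> radial_cosum C AA1 AA2"
    unfolding radial_cosum_def radial_sum_eq_closure eq
    using closure_radial_sum_int_Int_interior interior_subset by blast
  show "radial_cosum C AA1 AA2 \<subseteq> radial_cosum_int \<union> frontier C"
    unfolding radial_cosum_def radial_sum_eq_closure eq
    using closure_radial_sum_int_Int_interior A1.C_diff_interior_subset_frontier closure_subset by blast
qed

lemma emeasure_radial_cosum_int:
  "emeasure lborel radial_cosum_int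
     = (\<integral>\<^sup>+x. ennreal (indicator A1.B x * (A1.radial_dir x + A2.radial_dir x) ^ DIM('a)) \<partial>lborel)"
proof -
  have "radial_cosum_int = {x\<in>U. norm x ^ DIM('a) < (A1.radial_dir x + A2.radial_dir x) ^ DIM('a)}"
  proof -
    have "1 < A1.\<rho> x + A2.\<rho> x \<longleftrightarrow> norm x ^ DIM('a) < (A1.radial_dir x + A2.radial_dir x) ^ DIM('a)"
      if x: "x \<in> U" for x
    proof -
      have "0 < norm x" using x A1.zero_notin_interior by auto
      moreover have "0 \<le> A1.radial_dir x + A2.radial_dir x"
        using A1.radial_dir_pos[OF x] A2.radial_dir_pos[OF x] by simp
      ultimately show ?thesis
        by (simp add: power_less_power_iff_base A1.radial_dir_def A2.radial_dir_def
            distrib_left[symmetric])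
    qed
    then show ?thesis by (auto simp: radial_cosum_int_def)
  qed
  also have "emeasure lborel \<dots>
      = (\<integral>\<^sup>+x. indicator A1.B x * ennreal ((A1.radial_dir x + A2.radial_dir x) ^ DIM('a)) \<partial>lborel)"
    by (rule emeasure_homogeneous_subgraph)
       (auto intro!: continuous_intros A1.continuous_on_radial_dir A2.continuous_on_radial_dir
             simp: A1.interior_scaleR A1.radial_dir_scaleR A2.radial_dir_scaleR)
  also have "\<dots> = (\<integral>\<^sup>+x. ennreal (indicator A1.B x * (A1.radial_dir x + A2.radial_dir x) ^ DIM('a)) \<partial>lborel)"
    by (intro nn_integral_cong) (simp split: split_indicator)
  finally show ?thesis .
qed

lemma radial_sum_int_subset_AA_sum: "radial_sum_int \<subseteq> AA_sum"
proof
  fix x assume "x \<in> radial_sum_int"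
  then have x: "x \<in> U" "A1.\<rho> x + A2.\<rho> x \<le> 1" by (auto simp: radial_sum_int_def)
  have "(1 - A1.\<rho> x) *\<^sub>R x \<in> AA2"
    using A2.scaleR_mem_iff_radial_le[OF x(1)] x(2) by simp
  moreover have "x = A1.\<rho> x *\<^sub>R x + (1 - A1.\<rho> x) *\<^sub>R x" by (simp add: algebra_simps)
  ultimately show "x \<in> AA_sum" using A1.radial_mem[OF x(1)] unfolding AA_sum_def by blast
qed

lemma convex_AA_sum: "convex AA_sum"
proof -
  have "AA_sum = (\<Union>x\<in>AA1. \<Union>y\<in>AA2. {x + y})" unfolding AA_sum_def by blast
  then show ?thesis using convex_sums[OF A1.convex_AA A2.convex_AA] by simp
qed

lemma co_sum_subset: "co_sum C AA1 AA2 \<subseteq> radial_cosum C AA1 AA2 \<union> frontier AA_sum"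
proof
  fix x assume "x \<in> co_sum C AA1 AA2"
  then have x: "x \<in> C" "x \<notin> AA_sum" by (auto simp: co_sum_def AA_sum_def)
  show "x \<in> radial_cosum C AA1 AA2 \<union> frontier AA_sum"
  proof (cases "x \<in> closure AA_sum")
    case True
    then show ?thesis using x interior_subset by (auto simp: frontier_def)
  next
    case False
    have "closure radial_sum_int \<subseteq> closure AA_sum"
      using radial_sum_int_subset_AA_sum by (rule closure_mono)
    then show ?thesis using False x by (auto simp: radial_cosum_def radial_sum_eq_closure)
  qed
qed

abbreviation "vol1 \<equiv> measure lebesgue (C - AA1)"
abbreviation "vol2 \<equiv> measure lebesgue (C - AA2)"
abbreviation "vol_radial \<equiv> measure lebesgue (radial_cosum C AA1 AA2)"
abbreviation "vol_co \<equiv> measure lebesgue (co_sum C AA1 AA2)"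

lemma nn_integral_radial_dir_power_root:
  "(\<integral>\<^sup>+x. ennreal (indicator A1.B x * A1.radial_dir x ^ DIM('a)) \<partial>lborel) = ennreal (root DIM('a) vol1 ^ DIM('a))"
  "(\<integral>\<^sup>+x. ennreal (indicator A1.B x * A2.radial_dir x ^ DIM('a)) \<partial>lborel) = ennreal (root DIM('a) vol2 ^ DIM('a))"
  using A1.nn_integral_radial_dir_power A2.nn_integral_radial_dir_power
  by (simp_all add: real_root_pow_pos2)

lemma radial_dir_minkowski_conditions:
  "open A1.B" "continuous_on A1.B A1.radial_dir" "\<And>x. x \<in> A1.B \<Longrightarrow> 0 \<le> A1.radial_dir x"
  "continuous_on A1.B A2.radial_dir" "\<And>x. x \<in> A1.B \<Longrightarrow> 0 \<le> A2.radial_dir x"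
  "0 < root DIM('a) vol1" "0 < root DIM('a) vol2"
  using A1.open_B A1.measure_C_diff_AA_pos A2.measure_C_diff_AA_pos
    continuous_on_subset[OF A1.continuous_on_radial_dir] continuous_on_subset[OF A2.continuous_on_radial_dir]
    less_imp_le[OF A1.radial_dir_pos] less_imp_le[OF A2.radial_dir_pos]
  by auto

lemma nn_integral_radial_dir_add_le:
  "(\<integral>\<^sup>+x. ennreal (indicator A1.B x * (A1.radial_dir x + A2.radial_dir x) ^ DIM('a)) \<partial>lborel)
     \<le> ennreal ((root DIM('a) vol1 + root DIM('a) vol2) ^ DIM('a))"
  using nn_integral_power_add_le[OF radial_dir_minkowski_conditions nn_integral_radial_dir_power_root] .

lemma lmeasurable_radial_cosum_int: "radial_cosum_int \<in> lmeasurable"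
proof (rule fmeasurableI)
  show "radial_cosum_int \<in> sets lebesgue" using open_radial_cosum_int by simp
  have "emeasure lebesgue radial_cosum_int = emeasure lborel radial_cosum_int"
    using open_radial_cosum_int by simp
  also have "\<dots> < \<infinity>"
    using nn_integral_radial_dir_add_le emeasure_radial_cosum_int by (simp add: le_less_trans)
  finally show "emeasure lebesgue radial_cosum_int < \<infinity>" .
qed

lemma lmeasurable_radial_cosum: "radial_cosum C AA1 AA2 \<in> lmeasurable"
proof (rule fmeasurable_of_subset_Un_negligible[OF lmeasurable_radial_cosum_int A1.negligible_frontier_C radial_cosum_subset])
  have "radial_cosum C AA1 AA2 = C \<inter> - closure radial_sum_int"
    by (auto simp: radial_cosum_def radial_sum_eq_closure)
  then show "radial_cosum C AA1 AA2 \<in> sets lebesgue"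
    using A1.closed_C by (simp add: borel_open borel_closed sets.Int)
qed

lemma lmeasurable_co_sum: "co_sum C AA1 AA2 \<in> lmeasurable"
proof (rule fmeasurable_of_subset_Un_negligible[OF lmeasurable_radial_cosum
      negligible_convex_frontier[OF convex_AA_sum] co_sum_subset])
  have "co_sum C AA1 AA2 = C - AA_sum" by (auto simp: co_sum_def AA_sum_def)
  then show "co_sum C AA1 AA2 \<in> sets lebesgue"
    using A1.closed_C sets_lebesgue_convex[OF convex_AA_sum] by (simp add: borel_closed sets.Diff)
qed

lemma ennreal_measure_radial_cosum:
  "ennreal vol_radial
     = (\<integral>\<^sup>+x. ennreal (indicator A1.B x * (A1.radial_dir x + A2.radial_dir x) ^ DIM('a)) \<partial>lborel)"
proof -
  have "vol_radial = measure lebesgue radial_cosum_int"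
  proof (rule antisym)
    show "vol_radial \<le> measure lebesgue radial_cosum_int"
      by (rule measure_le_of_subset_Un_negligible[OF lmeasurable_radial_cosum_int
            A1.negligible_frontier_C radial_cosum_subset])
    show "measure lebesgue radial_cosum_int \<le> vol_radial"
      using radial_cosum_int_subset
      by (intro measure_le_of_subset_Un_negligible[OF lmeasurable_radial_cosum negligible_empty]) blast
  qed
  also have "ennreal \<dots> = emeasure lebesgue radial_cosum_int"
    using lmeasurable_radial_cosum_int by (simp add: emeasure_eq_measure2)
  also have "\<dots> = emeasure lborel radial_cosum_int"
    using open_radial_cosum_int by simp
  finally show ?thesis using emeasure_radial_cosum_int by simp
qed

lemma measure_co_sum_le: "vol_co \<le> vol_radial"
  using measure_le_of_subset_Un_negligible[OF lmeasurable_radial_cosum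
      negligible_convex_frontier[OF convex_AA_sum] co_sum_subset] .

lemma measure_radial_cosum_le: "vol_radial \<le> (root DIM('a) vol1 + root DIM('a) vol2) ^ DIM('a)"
proof -
  have "ennreal vol_radial \<le> ennreal ((root DIM('a) vol1 + root DIM('a) vol2) ^ DIM('a))"
    using ennreal_measure_radial_cosum nn_integral_radial_dir_add_le by simp
  then show ?thesis
    using A1.measure_C_diff_AA_pos A2.measure_C_diff_AA_pos by (simp add: ennreal_le_iff)
qed

lemma radial_dilate:
  assumes k: "0 < k" and D: "AA2 = (\<lambda>x. k *\<^sub>R x) ` AA1" and x: "x \<in> U"
  shows "A2.\<rho> x = k * A1.\<rho> x"
proof -
  have iff: "r *\<^sub>R x \<in> AA2 \<longleftrightarrow> (r / k) *\<^sub>R x \<in> AA1" for r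
  proof
    assume "r *\<^sub>R x \<in> AA2"
    then obtain a where a: "a \<in> AA1" "r *\<^sub>R x = k *\<^sub>R a" using D by auto
    have "(r / k) *\<^sub>R x = (1 / k) *\<^sub>R (r *\<^sub>R x)" by simp
    also have "\<dots> = a" using a(2) k by simp
    finally show "(r / k) *\<^sub>R x \<in> AA1" using a(1) by simp
  next
    assume "(r / k) *\<^sub>R x \<in> AA1"
    then have "k *\<^sub>R ((r / k) *\<^sub>R x) \<in> AA2" using D by blast
    then show "r *\<^sub>R x \<in> AA2" using k by simp
  qed
  have "A2.\<rho> x \<le> k * A1.\<rho> x"
    using A1.radial_mem[OF x] k iff[of "k * A1.\<rho> x"] A2.scaleR_mem_iff_radial_le[OF x] by simp
  moreover have "A1.\<rho> x \<le> A2.\<rho> x / k"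
    using A2.radial_mem[OF x] iff[of "A2.\<rho> x"] A1.scaleR_mem_iff_radial_le[OF x] by blast
  ultimately show ?thesis using k by (simp add: field_simps)
qed

lemma dilate_if_radial:
  assumes k: "0 < k" and radial: "\<And>x. x \<in> U \<Longrightarrow> A2.\<rho> x = k * A1.\<rho> x"
  shows "AA2 = (\<lambda>x. k *\<^sub>R x) ` AA1"
proof -
  have "AA2 \<inter> U = (\<lambda>x. k *\<^sub>R x) ` (AA1 \<inter> U)"
  proof (intro equalityI subsetI)
    fix x assume x: "x \<in> AA2 \<inter> U"
    have y: "(1 / k) *\<^sub>R x \<in> U" using A1.interior_scaleR x k by simp
    have "A1.\<rho> ((1 / k) *\<^sub>R x) = A2.\<rho> x"
      using A1.radial_scaleR[of x "1 / k"] radial x k by simp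
    then have "(1 / k) *\<^sub>R x \<in> AA1"
      using A1.mem_iff_radial_le[OF y] A2.mem_iff_radial_le x by auto
    moreover have "x = k *\<^sub>R ((1 / k) *\<^sub>R x)" using k by simp
    ultimately show "x \<in> (\<lambda>x. k *\<^sub>R x) ` (AA1 \<inter> U)" using y by blast
  next
    fix x assume "x \<in> (\<lambda>x. k *\<^sub>R x) ` (AA1 \<inter> U)"
    then obtain y where y: "x = k *\<^sub>R y" "y \<in> AA1" "y \<in> U" by blast
    have x: "x \<in> U" using A1.interior_scaleR y k by simp
    have "A2.\<rho> x = A1.\<rho> y"
      using radial[OF x] A1.radial_scaleR[OF y(3) k] y(1) k by simp
    then show "x \<in> AA2 \<inter> U" using A1.mem_iff_radial_le y A2.mem_iff_radial_le[OF x] x by auto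
  qed
  then show ?thesis
    using closure_scaleR[of k "AA1 \<inter> U"] A1.closure_AA_Int_interior A2.closure_AA_Int_interior by simp
qed

lemma dilates_if_measure_radial_cosum_eq:
  assumes N: "2 \<le> DIM('a)" and eq: "vol_radial = (root DIM('a) vol1 + root DIM('a) vol2) ^ DIM('a)"
  shows "dilates AA1 AA2"
proof -
  define k where "k = root DIM('a) vol2 / root DIM('a) vol1"
  have k: "0 < k" using radial_dir_minkowski_conditions(6,7) by (simp add: k_def)
  have B: "A2.radial_dir x = k * A1.radial_dir x" if "x \<in> A1.B" for x
    using nn_integral_power_add_eq_imp_proportional[OF radial_dir_minkowski_conditions N
        nn_integral_radial_dir_power_root _ that] ennreal_measure_radial_cosum eq
    by (simp add: k_def)
  have "A2.\<rho> x = k * A1.\<rho> x" if x: "x \<in> U" for x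
  proof -
    have n: "0 < norm x" using x A1.zero_notin_interior by auto
    define c where "c = 1 / (2 * norm x)"
    have c: "0 < c" using n by (simp add: c_def)
    have "c *\<^sub>R x \<in> A1.B" using A1.interior_scaleR[OF x c] n by (simp add: c_def)
    then have "A2.radial_dir x = k * A1.radial_dir x"
      using B A1.radial_dir_scaleR[OF x c] A2.radial_dir_scaleR[OF x c] by simp
    then show ?thesis using n by (simp add: A1.radial_dir_def A2.radial_dir_def)
  qed
  then show ?thesis using k dilate_if_radial unfolding dilates_def by blast
qed

lemma measure_radial_cosum_eq_if_dilates:
  assumes "dilates AA1 AA2"
  shows "vol_radial = (root DIM('a) vol1 + root DIM('a) vol2) ^ DIM('a)"
proof -
  obtain k where k: "0 < k" and D: "AA2 = (\<lambda>x. k *\<^sub>R x) ` AA1"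
    using assms unfolding dilates_def by blast
  have h: "A2.radial_dir x = k * A1.radial_dir x" "A1.radial_dir x + A2.radial_dir x = (1 + k) * A1.radial_dir x"
    if "x \<in> A1.B" for x
    using radial_dilate[OF k D] that by (simp_all add: A1.radial_dir_def A2.radial_dir_def algebra_simps)
  note scale = nn_integral_indicator_mult_power[OF A1.open_B radial_dir_minkowski_conditions(2)]
  have "ennreal vol2 = (\<integral>\<^sup>+x. ennreal (indicator A1.B x * A2.radial_dir x ^ DIM('a)) \<partial>lborel)"
    by (rule A2.nn_integral_radial_dir_power[symmetric])
  also have "\<dots> = (\<integral>\<^sup>+x. ennreal (indicator A1.B x * (k * A1.radial_dir x) ^ DIM('a)) \<partial>lborel)"
    by (intro nn_integral_cong) (simp add: h(1) split: split_indicator)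
  also have "\<dots> = ennreal (k ^ DIM('a)) * ennreal vol1"
    using k by (simp add: scale A1.nn_integral_radial_dir_power)
  finally have vol2: "vol2 = k ^ DIM('a) * vol1"
    using k by (simp add: ennreal_mult'[symmetric])
  have "ennreal vol_radial = (\<integral>\<^sup>+x. ennreal (indicator A1.B x * ((1 + k) * A1.radial_dir x) ^ DIM('a)) \<partial>lborel)"
    unfolding ennreal_measure_radial_cosum by (intro nn_integral_cong) (simp add: h(2) split: split_indicator)
  also have "\<dots> = ennreal ((1 + k) ^ DIM('a)) * ennreal vol1"
    using k by (simp add: scale A1.nn_integral_radial_dir_power)
  finally have "vol_radial = (1 + k) ^ DIM('a) * vol1"
    using k by (simp add: ennreal_mult'[symmetric])
  also have "\<dots> = ((1 + k) * root DIM('a) vol1) ^ DIM('a)"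
    using A1.measure_C_diff_AA_pos by (simp add: power_mult_distrib real_root_pow_pos2)
  also have "(1 + k) * root DIM('a) vol1 = root DIM('a) vol1 + root DIM('a) vol2"
    using k by (simp add: vol2 real_root_mult real_root_power_cancel algebra_simps)
  finally show ?thesis .
qed

lemma AA_sum_eq_if_dilate:
  assumes k: "0 < k" and D: "AA2 = (\<lambda>x. k *\<^sub>R x) ` AA1"
  shows "AA_sum = (\<lambda>x. (1 + k) *\<^sub>R x) ` AA1"
proof (intro equalityI subsetI)
  fix x assume "x \<in> AA_sum"
  then obtain a b where ab: "x = a + k *\<^sub>R b" "a \<in> AA1" "b \<in> AA1"
    using D unfolding AA_sum_def by blast
  have "(1 / (1 + k)) *\<^sub>R a + (k / (1 + k)) *\<^sub>R b \<in> AA1"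
    using k ab(2,3) by (intro convexD[OF A1.convex_AA]) (simp_all add: add_divide_distrib[symmetric])
  moreover have "x = (1 + k) *\<^sub>R ((1 / (1 + k)) *\<^sub>R a + (k / (1 + k)) *\<^sub>R b)"
    using k ab(1) by (simp add: scaleR_add_right)
  ultimately show "x \<in> (\<lambda>x. (1 + k) *\<^sub>R x) ` AA1" by blast
next
  fix x assume "x \<in> (\<lambda>x. (1 + k) *\<^sub>R x) ` AA1"
  then obtain a where "x = a + k *\<^sub>R a" "a \<in> AA1" by (auto simp: algebra_simps)
  then show "x \<in> AA_sum" using D unfolding AA_sum_def by blast
qed

lemma measure_co_sum_eq_if_dilates:
  assumes "dilates AA1 AA2"
  shows "vol_co = vol_radial"
proof -
  obtain k where k: "0 < k" and D: "AA2 = (\<lambda>x. k *\<^sub>R x) ` AA1"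
    using assms unfolding dilates_def by blast
  have in_sum: "x \<in> radial_sum_int" if x: "x \<in> AA_sum" "x \<in> U" for x
  proof -
    obtain a where "x = (1 + k) *\<^sub>R a" "a \<in> AA1"
      using x(1) unfolding AA_sum_eq_if_dilate[OF k D] by blast
    then have "(1 / (1 + k)) *\<^sub>R x \<in> AA1" using k by simp
    then have "A1.\<rho> x \<le> 1 / (1 + k)" using A1.scaleR_mem_iff_radial_le x(2) by blast
    then show "x \<in> radial_sum_int"
      using x k radial_dilate[OF k D] by (simp add: radial_sum_int_def field_simps)
  qed
  have "vol_radial \<le> vol_co"
  proof (rule measure_le_of_subset_Un_negligible[OF lmeasurable_co_sum A1.negligible_frontier_C])
    show "radial_cosum C AA1 AA2 \<subseteq> co_sum C AA1 AA2 \<union> frontier C"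
    proof
      fix x assume "x \<in> radial_cosum C AA1 AA2"
      then have x: "x \<in> C" "x \<notin> closure radial_sum_int"
        by (auto simp: radial_cosum_def radial_sum_eq_closure)
      show "x \<in> co_sum C AA1 AA2 \<union> frontier C"
      proof (cases "x \<in> U")
        case True
        then have "x \<notin> AA_sum" using in_sum x(2) closure_subset by blast
        then show ?thesis using x(1) by (simp add: co_sum_def AA_sum_def)
      next
        case False
        then show ?thesis using x(1) A1.C_diff_interior_subset_frontier by blast
      qed
    qed
  qed
  then show ?thesis using measure_co_sum_le by simp
qed

end

theorem corollary6p1:
  fixes C AA1 AA2 :: "'a::euclidean_space set"
  assumes "DIM('a) \<ge> 2"
    and "pointed_cone C"
    and "C_close C AA1" and "C_close C AA2"
  defines "n \<equiv> real DIM('a)"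
  shows "measure lebesgue (co_sum C AA1 AA2) powr (1/n)
           \<le> measure lebesgue (radial_cosum C AA1 AA2) powr (1/n)
       \<and> measure lebesgue (radial_cosum C AA1 AA2) powr (1/n)
           \<le> measure lebesgue (C - AA1) powr (1/n) + measure lebesgue (C - AA2) powr (1/n)
       \<and> ((measure lebesgue (co_sum C AA1 AA2) powr (1/n)
              = measure lebesgue (radial_cosum C AA1 AA2) powr (1/n)
           \<and> measure lebesgue (radial_cosum C AA1 AA2) powr (1/n)
              = measure lebesgue (C - AA1) powr (1/n) + measure lebesgue (C - AA2) powr (1/n))
          \<longleftrightarrow> dilates AA1 AA2)"
proof -
  interpret C_close_pair C AA1 AA2 using assms(2-4) by unfold_locales
  have powr_eq_root: "measure lebesgue S powr (1/n) = root DIM('a) (measure lebesgue S)" for S :: "'a set"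
    using root_powr_inverse[of "DIM('a)" "measure lebesgue S"] by (simp add: n_def)
  define s where "s = root DIM('a) vol1 + root DIM('a) vol2"
  have "0 \<le> s" by (simp add: s_def)
  then have root_s: "root DIM('a) (s ^ DIM('a)) = s" by (simp add: real_root_power_cancel)
  have "root DIM('a) vol_co \<le> root DIM('a) vol_radial"
    using measure_co_sum_le by simp
  moreover have "root DIM('a) vol_radial \<le> root DIM('a) (s ^ DIM('a))"
    using measure_radial_cosum_le by (simp add: s_def)
  then have "root DIM('a) vol_radial \<le> s" unfolding root_s .
  moreover have "root DIM('a) vol_radial = s \<longleftrightarrow> vol_radial = s ^ DIM('a)"
    using real_root_eq_iff[of "DIM('a)" vol_radial "s ^ DIM('a)"] unfolding root_s by simp
  then have "root DIM('a) vol_co = root DIM('a) vol_radial \<and> root DIM('a) vol_radial = s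
      \<longleftrightarrow> dilates AA1 AA2"
    using dilates_if_measure_radial_cosum_eq[OF assms(1)] measure_radial_cosum_eq_if_dilates
      measure_co_sum_eq_if_dilates unfolding s_def by auto
  ultimately show ?thesis unfolding powr_eq_root s_def by blast
qed

end
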